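(* Let $F$ be an infinite field of characteristic different from $2$, and let $\mathbb{O}=(((F,\alpha),\beta),\gamma)$ be the octonion (Cayley–Dickson) algebra, with its $\mathbb{Z}_2^3$-grading coming from the Cayley–Dickson process. Then the $T_{\mathbb{Z}_2^3}$-ideal $T_{\mathbb{Z}_2^3}(\mathbb{O})$ of $\mathbb{Z}_2^3$-graded polynomial identities of $\mathbb{O}$ is generated, as a graded $T$-ideal, by the following identities (for distinct variables $x_1,x_2,x_3$ whose degrees satisfy the stated conditions): \begin{align*} [x_1,x_2]=0, &\quad |\langle g(x_1),g(x_2)\rangle|\le 2;\\ x_1\circ x_2=0, &\quad |\langle g(x_1),g(x_2)\rangle|\ge 4;\\ (x_1,x_2,x_3)=0, &\quad |\langle g(x_1),g(x_2),g(x_3)\rangle|\le 4;\\ (x_1x_2)x_3+x_1(x_2x_3)=0, &\quad \langle g(x_1),g(x_2),g(x_3)\rangle=\mathbb{Z}_2^3. \end{align*}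
   Context: Cayley–Dickson process: if $A$ is a unital algebra over a commutative ring with an involution $a\mapsto\bar a$ and $\alpha\neq 0$ a scalar, $(A,\alpha)=A\oplus A$ with product $(a_1,a_2)(a_3,a_4)=(a_1a_3+\alpha a_4\bar a_2,\ \bar a_1a_4+a_3a_2)$ and involution $\overline{(a_1,a_2)}=(\bar a_1,-a_2)$. If $A$ is $G$-graded, $(A,\alpha)$ is $G\times\mathbb{Z}_2$-graded by $(A,\alpha)_{(h,0)}=A_h\oplus 0$, $(A,\alpha)_{(h,1)}=0\oplus A_h$. Here $F$ is given the trivial involution and trivial grading, and $\alpha,\beta,\gamma\in F$ are nonzero, so $\mathbb{O}$ is $\mathbb{Z}_2^3$-graded; groups $\mathbb{Z}_2^k$ are written additively. Graded identities: $F_G\{X\}$ is the free nonassociative algebra on variables $x_i^a$ ($i\in\mathbb{N}$, $a\in G$), graded by declaring $g(x_i^a)=a$ and $g(uv)=g(u)g(v)$ for monomials. A polynomial $f(x_1,\dots,x_n)$ is a graded identity of a $G$-graded algebra $A$ if $f(a_1,\dots,a_n)=0$ for all $a_i\in A_{g(x_i)}$; $T_G(A)$ is the set of all of them. A graded $T$-ideal is an ideal of $F_G\{X\}$ invariant under all graded endomorphisms (those sending each variable to an element of the same degree); "generated" means the smallest such ideal containing the given polynomials. $[x,y]=xy-yx$, $x\circ y=xy+yx$, $(x,y,z)=(xy)z-x(yz)$; $\langle\cdot\rangle$ is the subgroup generated. *)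

theory Defs
  imports "HOL-Library.Poly_Mapping" "HOL-Library.Product_Plus"
begin

text \<open>Z_2 is modelled by bool with addition = exclusive or (False = 0).
  The Cayley-Dickson grading of O = (((F,alpha),beta),gamma) is by
  (Z_2 x Z_2) x Z_2 (the trivial group grading F is dropped).\<close>

type_synonym z2_3 = "(bool \<times> bool) \<times> bool"

definition gadd :: "z2_3 \<Rightarrow> z2_3 \<Rightarrow> z2_3" where
  "gadd x y = (((fst (fst x) \<noteq> fst (fst y)), (snd (fst x) \<noteq> snd (fst y))), (snd x \<noteq> snd y))"

definition gzero :: z2_3 where "gzero = ((False, False), False)"

inductive_set gen_subgroup :: "z2_3 set \<Rightarrow> z2_3 set" for S where
  gen_zero: "gzero \<in> gen_subgroup S"
| gen_base: "s \<in> S \<Longrightarrow> s \<in> gen_subgroup S"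
| gen_add: "a \<in> gen_subgroup S \<Longrightarrow> b \<in> gen_subgroup S \<Longrightarrow> gadd a b \<in> gen_subgroup S"

fun cd_mul :: "('b::ab_group_add \<Rightarrow> 'b \<Rightarrow> 'b) \<Rightarrow> ('b \<Rightarrow> 'b) \<Rightarrow> ('s \<Rightarrow> 'b \<Rightarrow> 'b) \<Rightarrow> 's
                \<Rightarrow> 'b \<times> 'b \<Rightarrow> 'b \<times> 'b \<Rightarrow> 'b \<times> 'b" where
  "cd_mul mul cnj sc \<alpha> (a1, a2) (a3, a4) =
     (mul a1 a3 + sc \<alpha> (mul a4 (cnj a2)), mul (cnj a1) a4 + mul a3 a2)"

fun cd_cnj :: "('b::ab_group_add \<Rightarrow> 'b) \<Rightarrow> 'b \<times> 'b \<Rightarrow> 'b \<times> 'b" where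
  "cd_cnj cnj (a1, a2) = (cnj a1, - a2)"

fun cd_sc :: "('s \<Rightarrow> 'b \<Rightarrow> 'b) \<Rightarrow> 's \<Rightarrow> 'b \<times> 'b \<Rightarrow> 'b \<times> 'b" where
  "cd_sc sc c (a1, a2) = (sc c a1, sc c a2)"

fun cd_hom :: "('g \<Rightarrow> 'b::zero \<Rightarrow> bool) \<Rightarrow> 'g \<times> bool \<Rightarrow> 'b \<times> 'b \<Rightarrow> bool" where
  "cd_hom hom (h, b) (x, y) = (if b then x = 0 \<and> hom h y else hom h x \<and> y = 0)"

definition mul1 :: "'a::field \<Rightarrow> 'a \<times> 'a \<Rightarrow> 'a \<times> 'a \<Rightarrow> 'a \<times> 'a" where
  "mul1 \<alpha> = cd_mul (*) id (*) \<alpha>"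
definition cnj1 :: "'a::field \<times> 'a \<Rightarrow> 'a \<times> 'a" where "cnj1 = cd_cnj id"
definition sc1 :: "'a::field \<Rightarrow> 'a \<times> 'a \<Rightarrow> 'a \<times> 'a" where "sc1 = cd_sc (*)"
definition hom1 :: "bool \<Rightarrow> 'a::field \<times> 'a \<Rightarrow> bool" where
  "hom1 b p = cd_hom (\<lambda>(_::unit) (_::'a). True) ((), b) p"

type_synonym 'a quat = "('a \<times> 'a) \<times> ('a \<times> 'a)"
definition mul2 :: "'a::field \<Rightarrow> 'a \<Rightarrow> 'a quat \<Rightarrow> 'a quat \<Rightarrow> 'a quat" where
  "mul2 \<alpha> \<beta> = cd_mul (mul1 \<alpha>) cnj1 sc1 \<beta>"
definition cnj2 :: "'a::field quat \<Rightarrow> 'a quat" where "cnj2 = cd_cnj cnj1"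
definition sc2 :: "'a::field \<Rightarrow> 'a quat \<Rightarrow> 'a quat" where "sc2 = cd_sc sc1"
definition hom2 :: "bool \<times> bool \<Rightarrow> 'a::field quat \<Rightarrow> bool" where "hom2 = cd_hom hom1"

type_synonym 'a oct = "'a quat \<times> 'a quat"
definition omul :: "'a::field \<Rightarrow> 'a \<Rightarrow> 'a \<Rightarrow> 'a oct \<Rightarrow> 'a oct \<Rightarrow> 'a oct" where
  "omul \<alpha> \<beta> \<gamma> = cd_mul (mul2 \<alpha> \<beta>) cnj2 sc2 \<gamma>"
definition osc :: "'a::field \<Rightarrow> 'a oct \<Rightarrow> 'a oct" where "osc = cd_sc sc2"
definition ohom :: "z2_3 \<Rightarrow> 'a::field oct \<Rightarrow> bool" where "ohom = cd_hom hom2"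

text \<open>Variables x_i^a are pairs (i,a); monomials are nonassociative words.\<close>
type_synonym gvar = "nat \<times> z2_3"

datatype 'v mon = Var 'v | Mul "'v mon" "'v mon"

type_synonym 'a fpoly = "gvar mon \<Rightarrow>\<^sub>0 'a"

fun mdeg :: "gvar mon \<Rightarrow> z2_3" where
  "mdeg (Var v) = snd v"
| "mdeg (Mul u w) = gadd (mdeg u) (mdeg w)"

definition pvar :: "gvar \<Rightarrow> 'a::field fpoly" where
  "pvar v = Poly_Mapping.single (Var v) 1"

definition pmul :: "'a::field fpoly \<Rightarrow> 'a fpoly \<Rightarrow> 'a fpoly" where
  "pmul p q = (\<Sum>m\<in>Poly_Mapping.keys p. \<Sum>n\<in>Poly_Mapping.keys q.
                 Poly_Mapping.single (Mul m n) (Poly_Mapping.lookup p m * Poly_Mapping.lookup q n))"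

definition psc :: "'a::field \<Rightarrow> 'a fpoly \<Rightarrow> 'a fpoly" where
  "psc c p = Poly_Mapping.map (\<lambda>x. c * x) p"

definition phom :: "z2_3 \<Rightarrow> 'a::field fpoly \<Rightarrow> bool" where
  "phom a p = (\<forall>m\<in>Poly_Mapping.keys p. mdeg m = a)"

definition ideal_fp :: "'a::field fpoly set \<Rightarrow> bool" where
  "ideal_fp I = (0 \<in> I \<and> (\<forall>p\<in>I. \<forall>q\<in>I. p + q \<in> I) \<and> (\<forall>c. \<forall>p\<in>I. psc c p \<in> I)
     \<and> (\<forall>p\<in>I. \<forall>q. pmul p q \<in> I \<and> pmul q p \<in> I))"

definition graded_endo :: "('a::field fpoly \<Rightarrow> 'a fpoly) \<Rightarrow> bool" where
  "graded_endo \<phi> = ((\<forall>p q. \<phi> (p + q) = \<phi> p + \<phi> q) \<and> (\<forall>c p. \<phi> (psc c p) = psc c (\<phi> p))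
     \<and> (\<forall>p q. \<phi> (pmul p q) = pmul (\<phi> p) (\<phi> q))
     \<and> (\<forall>v. phom (snd v) (\<phi> (pvar v))))"

definition graded_T_ideal :: "'a::field fpoly set \<Rightarrow> bool" where
  "graded_T_ideal I = (ideal_fp I \<and> (\<forall>\<phi>. graded_endo \<phi> \<longrightarrow> \<phi> ` I \<subseteq> I))"

definition T_generated :: "'a::field fpoly set \<Rightarrow> 'a fpoly set" where
  "T_generated S = \<Inter> {I. graded_T_ideal I \<and> S \<subseteq> I}"

fun oeval_mon :: "'a::field \<Rightarrow> 'a \<Rightarrow> 'a \<Rightarrow> (gvar \<Rightarrow> 'a oct) \<Rightarrow> gvar mon \<Rightarrow> 'a oct" where
  "oeval_mon \<alpha> \<beta> \<gamma> \<nu> (Var v) = \<nu> v"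
| "oeval_mon \<alpha> \<beta> \<gamma> \<nu> (Mul u w) = omul \<alpha> \<beta> \<gamma> (oeval_mon \<alpha> \<beta> \<gamma> \<nu> u) (oeval_mon \<alpha> \<beta> \<gamma> \<nu> w)"

definition oeval :: "'a::field \<Rightarrow> 'a \<Rightarrow> 'a \<Rightarrow> (gvar \<Rightarrow> 'a oct) \<Rightarrow> 'a fpoly \<Rightarrow> 'a oct" where
  "oeval \<alpha> \<beta> \<gamma> \<nu> p = (\<Sum>m\<in>Poly_Mapping.keys p. osc (Poly_Mapping.lookup p m) (oeval_mon \<alpha> \<beta> \<gamma> \<nu> m))"

definition T_oct :: "'a::field \<Rightarrow> 'a \<Rightarrow> 'a \<Rightarrow> 'a fpoly set" where
  "T_oct \<alpha> \<beta> \<gamma> = {f. \<forall>\<nu>. (\<forall>v. ohom (snd v) (\<nu> v)) \<longrightarrow> oeval \<alpha> \<beta> \<gamma> \<nu> f = 0}"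

definition pcomm :: "'a::field fpoly \<Rightarrow> 'a fpoly \<Rightarrow> 'a fpoly" where
  "pcomm x y = pmul x y - pmul y x"
definition pjordan :: "'a::field fpoly \<Rightarrow> 'a fpoly \<Rightarrow> 'a fpoly" where
  "pjordan x y = pmul x y + pmul y x"
definition passoc :: "'a::field fpoly \<Rightarrow> 'a fpoly \<Rightarrow> 'a fpoly \<Rightarrow> 'a fpoly" where
  "passoc x y z = pmul (pmul x y) z - pmul x (pmul y z)"

definition oct_gens :: "'a::field fpoly set" where
  "oct_gens =
     {pcomm (pvar u) (pvar v) | u v. u \<noteq> v \<and> card (gen_subgroup {snd u, snd v}) \<le> 2}
   \<union> {pjordan (pvar u) (pvar v) | u v. u \<noteq> v \<and> card (gen_subgroup {snd u, snd v}) \<ge> 4}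
   \<union> {passoc (pvar u) (pvar v) (pvar w) | u v w. u \<noteq> v \<and> u \<noteq> w \<and> v \<noteq> w
         \<and> card (gen_subgroup {snd u, snd v, snd w}) \<le> 4}
   \<union> {pmul (pmul (pvar u) (pvar v)) (pvar w) + pmul (pvar u) (pmul (pvar v) (pvar w))
         | u v w. u \<noteq> v \<and> u \<noteq> w \<and> v \<noteq> w
         \<and> gen_subgroup {snd u, snd v, snd w} = UNIV}"

end

theory Submission
  imports Defs "HOL-Computational_Algebra.Polynomial" "HOL-Library.Multiset"
begin

text \<open>The homogeneous components of the octonions are the lines \<open>F e_a\<close>, and
  \<open>e_a e_b = c(a,b) e_(a+b)\<close> with nonzero structure constants satisfying \<open>c(a,b) = \<plusminus>c(b,a)\<close>
  and \<open>c(a,b) c(a+b,c) = \<plusminus>c(b,c) c(a,b+c)\<close>, the signs depending only on the size of the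
  generated subgroup; this makes the four families graded identities.
  Conversely, modulo these identities the factors of a monomial can be commuted and reassociated
  at the cost of a nonzero scalar, so two monomials with the same multiset of variables are
  proportional, and every polynomial is congruent to one whose monomials have pairwise distinct
  variable multisets. Evaluating such a graded identity at \<open>x_v \<mapsto> t_v e_g(v)\<close> yields a
  polynomial function of the scalars \<open>t_v\<close> whose coefficients are those of the identity times
  nonzero structure constants; over an infinite field it vanishes only if all of them are zero.\<close>

section \<open>The free nonassociative algebra\<close>

abbreviation pmon :: "gvar mon \<Rightarrow> 'a::field fpoly" where
  "pmon m \<equiv> Poly_Mapping.single m 1"

fun leaves :: "'v mon \<Rightarrow> 'v list" where
  "leaves (Var v) = [v]"
| "leaves (Mul u w) = leaves u @ leaves w"

lemma lookup_psc [simp]: "Poly_Mapping.lookup (psc c p) k = c * Poly_Mapping.lookup p k"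
  unfolding psc_def by transfer (simp add: when_def)

lemma lookup_pmul:
  "Poly_Mapping.lookup (pmul p q) k =
     (case k of Var _ \<Rightarrow> 0 | Mul m n \<Rightarrow> Poly_Mapping.lookup p m * Poly_Mapping.lookup q n)"
proof (cases k)
  case (Var v)
  then show ?thesis by (simp add: pmul_def lookup_sum lookup_single)
next
  case (Mul m' n')
  have "Poly_Mapping.lookup (pmul p q) k =
      (\<Sum>m\<in>Poly_Mapping.keys p. if m = m' then
         (\<Sum>n\<in>Poly_Mapping.keys q. if n = n' then Poly_Mapping.lookup p m * Poly_Mapping.lookup q n
                                   else 0) else 0)"
    unfolding pmul_def lookup_sum using Mul by (intro sum.cong refl) (auto simp: lookup_single when_def)
  also have "\<dots> = Poly_Mapping.lookup p m' * Poly_Mapping.lookup q n'"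
    by (simp add: in_keys_iff)
  finally show ?thesis using Mul by simp
qed

lemma pmul_add_left: "pmul (p + q) r = pmul p r + pmul q r"
  by (rule poly_mapping_eqI) (simp add: lookup_pmul lookup_add algebra_simps split: mon.split)

lemma pmul_add_right: "pmul r (p + q) = pmul r p + pmul r q"
  by (rule poly_mapping_eqI) (simp add: lookup_pmul lookup_add algebra_simps split: mon.split)

lemma pmul_diff_left: "pmul (p - q) r = pmul p r - pmul q r"
  by (rule poly_mapping_eqI) (simp add: lookup_pmul lookup_minus algebra_simps split: mon.split)

lemma pmul_diff_right: "pmul r (p - q) = pmul r p - pmul r q"
  by (rule poly_mapping_eqI) (simp add: lookup_pmul lookup_minus algebra_simps split: mon.split)

lemma pmul_psc_left: "pmul (psc c p) r = psc c (pmul p r)"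
  by (rule poly_mapping_eqI) (simp add: lookup_pmul algebra_simps split: mon.split)

lemma pmul_psc_right: "pmul r (psc c p) = psc c (pmul r p)"
  by (rule poly_mapping_eqI) (simp add: lookup_pmul algebra_simps split: mon.split)

lemma pmul_0 [simp]: "pmul 0 r = 0" "pmul r 0 = 0"
  by (rule poly_mapping_eqI, simp add: lookup_pmul split: mon.split)+

lemma pmul_single:
  "pmul (Poly_Mapping.single m a) (Poly_Mapping.single n b) = Poly_Mapping.single (Mul m n) (a * b)"
  by (rule poly_mapping_eqI) (auto simp add: lookup_pmul lookup_single when_def split: mon.split)

lemma pmul_sum_left: "pmul (sum f A) r = (\<Sum>a\<in>A. pmul (f a) r)"
  by (induction A rule: infinite_finite_induct) (auto simp: pmul_add_left)

lemma pmul_sum_right: "pmul r (sum f A) = (\<Sum>a\<in>A. pmul r (f a))"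
  by (induction A rule: infinite_finite_induct) (auto simp: pmul_add_right)

lemma psc_add: "psc c (p + q) = psc c p + psc c q"
  by (rule poly_mapping_eqI) (simp add: lookup_add algebra_simps)

lemma psc_diff: "psc c (p - q) = psc c p - psc c q"
  by (rule poly_mapping_eqI) (simp add: lookup_minus algebra_simps)

lemma psc_add_scalar: "psc (a + b) p = psc a p + psc b p"
  by (rule poly_mapping_eqI) (simp add: lookup_add algebra_simps)

lemma psc_mult: "psc (a * b) p = psc a (psc b p)"
  by (rule poly_mapping_eqI) simp

lemma psc_0 [simp]: "psc 0 p = 0" "psc c 0 = 0"
  by (rule poly_mapping_eqI, simp)+

lemma psc_1 [simp]: "psc 1 p = p"
  by (rule poly_mapping_eqI) simp

lemma psc_minus_one: "psc (-1) p = - p"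
  by (rule poly_mapping_eqI) simp

lemma psc_single: "psc c (Poly_Mapping.single m a) = Poly_Mapping.single m (c * a)"
  by (rule poly_mapping_eqI) (auto simp add: lookup_single when_def)

lemma poly_mapping_sum_single:
  "p = (\<Sum>m\<in>Poly_Mapping.keys p. Poly_Mapping.single m (Poly_Mapping.lookup p m))"
  by (rule poly_mapping_eqI) (simp add: lookup_sum lookup_single when_def in_keys_iff)

text \<open>Both substitution and evaluation are linear extensions of a map on monomials;
  \<open>sc\<close> is the scalar action of the target.\<close>

definition lin_ext :: "('a::field \<Rightarrow> 'c \<Rightarrow> 'c) \<Rightarrow> (gvar mon \<Rightarrow> 'c) \<Rightarrow> 'a fpoly \<Rightarrow> 'c::comm_monoid_add"
  where "lin_ext sc F p = (\<Sum>m\<in>Poly_Mapping.keys p. sc (Poly_Mapping.lookup p m) (F m))"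

locale scalar_action =
  fixes sc :: "'a::field \<Rightarrow> 'c::comm_monoid_add \<Rightarrow> 'c"
  assumes sc_zero: "sc 0 x = 0"
    and sc_add_scalar: "sc (a + b) x = sc a x + sc b x"
begin

lemma lin_ext_superset:
  assumes "finite S" "Poly_Mapping.keys p \<subseteq> S"
  shows "lin_ext sc F p = (\<Sum>m\<in>S. sc (Poly_Mapping.lookup p m) (F m))"
  unfolding lin_ext_def using assms
  by (intro sum.mono_neutral_left) (auto simp: in_keys_iff sc_zero)

lemma lin_ext_add: "lin_ext sc F (p + q) = lin_ext sc F p + lin_ext sc F q"
proof -
  let ?S = "Poly_Mapping.keys p \<union> Poly_Mapping.keys q"
  have "lin_ext sc F (p + q) = (\<Sum>m\<in>?S. sc (Poly_Mapping.lookup (p + q) m) (F m))"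
    by (rule lin_ext_superset) (use keys_add[of p q] in auto)
  also have "\<dots> = (\<Sum>m\<in>?S. sc (Poly_Mapping.lookup p m) (F m))
                 + (\<Sum>m\<in>?S. sc (Poly_Mapping.lookup q m) (F m))"
    by (simp add: lookup_add sc_add_scalar sum.distrib)
  also have "\<dots> = lin_ext sc F p + lin_ext sc F q"
    by (subst (1 2) lin_ext_superset[where S = ?S]) auto
  finally show ?thesis .
qed

lemma lin_ext_0 [simp]: "lin_ext sc F 0 = 0"
  by (simp add: lin_ext_def)

lemma lin_ext_sum: "lin_ext sc F (sum f A) = (\<Sum>a\<in>A. lin_ext sc F (f a))"
  by (induction A rule: infinite_finite_induct) (auto simp: lin_ext_add)

lemma lin_ext_single: "lin_ext sc F (Poly_Mapping.single m a) = sc a (F m)"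
  by (auto simp: lin_ext_def sc_zero)

lemma lin_ext_psc:
  assumes "\<And>a x. sc (c * a) x = g (sc a x)" "g 0 = 0" "\<And>x y. g (x + y) = g x + g y"
  shows "lin_ext sc F (psc c p) = g (lin_ext sc F p)"
proof -
  have "lin_ext sc F (psc c p) = (\<Sum>m\<in>Poly_Mapping.keys p. sc (Poly_Mapping.lookup (psc c p) m) (F m))"
    by (rule lin_ext_superset) (auto simp: in_keys_iff)
  also have "\<dots> = (\<Sum>m\<in>Poly_Mapping.keys p. g (sc (Poly_Mapping.lookup p m) (F m)))"
    by (simp add: assms(1))
  also have "\<dots> = g (lin_ext sc F p)"
    unfolding lin_ext_def using sum_comp_morphism[of g, OF assms(2,3)] by (simp add: o_def)
  finally show ?thesis .
qed

end

interpretation psc: scalar_action psc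
  by unfold_locales (simp_all add: psc_add_scalar)

fun subst_mon :: "(gvar \<Rightarrow> 'a::field fpoly) \<Rightarrow> gvar mon \<Rightarrow> 'a fpoly" where
  "subst_mon \<sigma> (Var v) = \<sigma> v"
| "subst_mon \<sigma> (Mul u w) = pmul (subst_mon \<sigma> u) (subst_mon \<sigma> w)"

definition psubst :: "(gvar \<Rightarrow> 'a::field fpoly) \<Rightarrow> 'a fpoly \<Rightarrow> 'a fpoly" where
  "psubst \<sigma> = lin_ext psc (subst_mon \<sigma>)"

lemma psubst_add: "psubst \<sigma> (p + q) = psubst \<sigma> p + psubst \<sigma> q"
  unfolding psubst_def by (rule psc.lin_ext_add)

lemma psubst_single: "psubst \<sigma> (Poly_Mapping.single m a) = psc a (subst_mon \<sigma> m)"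
  unfolding psubst_def by (rule psc.lin_ext_single)

lemma psubst_psc: "psubst \<sigma> (psc c p) = psc c (psubst \<sigma> p)"
  unfolding psubst_def by (rule psc.lin_ext_psc) (auto simp: psc_mult psc_add)

lemma psubst_diff: "psubst \<sigma> (p - q) = psubst \<sigma> p - psubst \<sigma> q"
proof -
  have "p - q = p + psc (-1) q" by (simp add: psc_minus_one)
  then show ?thesis by (simp only: psubst_add psubst_psc) (simp add: psc_minus_one)
qed

lemma psubst_pmul: "psubst \<sigma> (pmul p q) = pmul (psubst \<sigma> p) (psubst \<sigma> q)"
proof -
  have "psubst \<sigma> (pmul p q) = (\<Sum>m\<in>Poly_Mapping.keys p. \<Sum>n\<in>Poly_Mapping.keys q.
      psc (Poly_Mapping.lookup p m * Poly_Mapping.lookup q n) (pmul (subst_mon \<sigma> m) (subst_mon \<sigma> n)))"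
    unfolding pmul_def[of p q] psubst_def psc.lin_ext_sum
    by (simp only: psc.lin_ext_single subst_mon.simps)
  also have "\<dots> = pmul (psubst \<sigma> p) (psubst \<sigma> q)"
    unfolding psubst_def lin_ext_def pmul_sum_left
    unfolding pmul_sum_right pmul_psc_left pmul_psc_right psc_mult
    by (simp add: psc_mult[symmetric] mult.commute)
  finally show ?thesis .
qed

lemma psubst_pvar: "psubst \<sigma> (pvar v) = \<sigma> v"
  unfolding pvar_def psubst_single by (simp add: psc_single)

lemma graded_endo_psubst: "(\<And>v. phom (snd v) (\<sigma> v)) \<Longrightarrow> graded_endo (psubst \<sigma>)"
  unfolding graded_endo_def by (simp add: psubst_add psubst_psc psubst_pmul psubst_pvar)

lemma graded_endo_eq_psubst:
  assumes "graded_endo \<phi>"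
  shows "\<phi> p = psubst (\<lambda>v. \<phi> (pvar v)) p"
proof -
  have add: "\<phi> (p + q) = \<phi> p + \<phi> q" and sc: "\<phi> (psc c p) = psc c (\<phi> p)"
    and mul: "\<phi> (pmul p q) = pmul (\<phi> p) (\<phi> q)" for p q c
    using assms unfolding graded_endo_def by auto
  have sum: "\<phi> (sum f A) = (\<Sum>a\<in>A. \<phi> (f a))" for f and A :: "'b set"
    by (induction A rule: infinite_finite_induct) (auto simp: add add[of 0 0, simplified])
  have mon: "\<phi> (pmon m) = subst_mon (\<lambda>v. \<phi> (pvar v)) m" for m
  proof (induction m)
    case (Mul m1 m2)
    then show ?case using mul[of "pmon m1" "pmon m2"] by (simp add: pmul_single)
  qed (simp add: pvar_def)
  have "\<phi> (Poly_Mapping.single m a) = psubst (\<lambda>v. \<phi> (pvar v)) (Poly_Mapping.single m a)" for m a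
    using sc[of a "pmon m"] by (simp add: psc_single mon psubst_single)
  then show ?thesis
    by (subst (1 2) poly_mapping_sum_single) (simp add: sum psubst_def psc.lin_ext_sum)
qed

lemma graded_endo_psubst_pmon:
  "(\<And>v. mdeg (\<rho> v) = snd v) \<Longrightarrow> graded_endo (psubst (\<lambda>v. pmon (\<rho> v) :: 'a::field fpoly))"
  by (rule graded_endo_psubst) (simp add: phom_def)

section \<open>The graded basis of the octonions\<close>

fun obasis :: "z2_3 \<Rightarrow> 'a::field \<Rightarrow> 'a oct" where
  "obasis ((b1, b2), b3) s =
    (let p = (if b1 then (0, s) else (s, 0));
         q = (if b2 then (0, p) else (p, 0)) in
     if b3 then (0, q) else (q, 0))"

fun ocoord :: "z2_3 \<Rightarrow> 'a::field oct \<Rightarrow> 'a" where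
  "ocoord ((b1, b2), b3) x =
    (let q = (if b3 then snd x else fst x); c = (if b2 then snd q else fst q) in
     if b1 then snd c else fst c)"

text \<open>With \<open>e_a = obasis a 1\<close>, \<open>e_a e_b = oct_const \<alpha> \<beta> \<gamma> a b \<cdot> e_(a+b)\<close> (see \<open>omul_obasis\<close>).\<close>

definition oct_const :: "'a::field \<Rightarrow> 'a \<Rightarrow> 'a \<Rightarrow> z2_3 \<Rightarrow> z2_3 \<Rightarrow> 'a" where
  "oct_const \<alpha> \<beta> \<gamma> a b = ocoord (gadd a b) (omul \<alpha> \<beta> \<gamma> (obasis a 1) (obasis b 1))"

lemmas oct_defs =
  omul_def mul2_def mul1_def cnj2_def cnj1_def sc2_def sc1_def osc_def gadd_def Let_def zero_prod_def

lemma z2_3_cases: "(\<And>a1 a2 a3. a = ((a1, a2), a3) \<Longrightarrow> P) \<Longrightarrow> P"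
  by (metis prod.collapse)

lemma oct_cases:
  "(\<And>x1 x2 x3 x4 x5 x6 x7 x8. x = (((x1, x2), (x3, x4)), ((x5, x6), (x7, x8))) \<Longrightarrow> P) \<Longrightarrow> P"
  by (metis prod.collapse)

lemma all_z2_3: "(\<forall>a::z2_3. P a) \<longleftrightarrow> (\<forall>a1 a2 a3. P ((a1, a2), a3))"
  by (metis prod.collapse)

lemma omul_obasis:
  "omul \<alpha> \<beta> \<gamma> (obasis a s) (obasis b r) = obasis (gadd a b) (oct_const \<alpha> \<beta> \<gamma> a b * (s * r))"
proof -
  have "\<forall>a b. omul \<alpha> \<beta> \<gamma> (obasis a s) (obasis b r) = obasis (gadd a b) (oct_const \<alpha> \<beta> \<gamma> a b * (s * r))"
    unfolding all_z2_3 all_bool_eq oct_const_def by (simp add: oct_defs algebra_simps)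
  then show ?thesis by blast
qed

lemma oct_const_nonzero:
  assumes "\<alpha> \<noteq> 0" "\<beta> \<noteq> 0" "\<gamma> \<noteq> 0"
  shows "oct_const \<alpha> \<beta> \<gamma> a b \<noteq> 0"
proof -
  have "\<forall>a b. oct_const \<alpha> \<beta> \<gamma> a b \<noteq> 0"
    unfolding all_z2_3 all_bool_eq oct_const_def using assms by (simp add: oct_defs)
  then show ?thesis by blast
qed

lemma ohom_iff_obasis: "ohom a x \<longleftrightarrow> (\<exists>s. x = obasis a s)"
  by (cases a rule: z2_3_cases; cases x rule: oct_cases)
     (auto simp: ohom_def hom2_def hom1_def zero_prod_def Let_def split: if_splits)

lemma ocoord_obasis: "ocoord a (obasis b s) = (if a = b then s else 0)"
  by (cases a rule: z2_3_cases; cases b rule: z2_3_cases) (auto simp: Let_def zero_prod_def)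

lemma ocoord_add: "ocoord a (x + y) = ocoord a x + ocoord a y"
  by (cases a rule: z2_3_cases) (auto simp: Let_def)

lemma ocoord_0 [simp]: "ocoord a 0 = 0"
  by (cases a rule: z2_3_cases) (auto simp: Let_def zero_prod_def)

lemma ocoord_sum: "ocoord a (sum f A) = (\<Sum>x\<in>A. ocoord a (f x))"
  by (induction A rule: infinite_finite_induct) (auto simp: ocoord_add)

lemma obasis_add: "obasis a s + obasis a r = obasis a (s + r)"
  by (cases a rule: z2_3_cases) (auto simp: Let_def zero_prod_def)

lemma obasis_uminus: "- obasis a s = obasis a (- s)"
  by (cases a rule: z2_3_cases) (auto simp: Let_def zero_prod_def)

lemma obasis_0 [simp]: "obasis a 0 = 0"
  by (cases a rule: z2_3_cases) (auto simp: Let_def zero_prod_def)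

lemma obasis_sum: "(\<Sum>x\<in>A. obasis a (f x)) = obasis a (sum f A)"
  by (induction A rule: infinite_finite_induct) (auto simp: obasis_add)

lemma osc_obasis: "osc c (obasis a s) = obasis a (c * s)"
  by (cases a rule: z2_3_cases) (auto simp: Let_def zero_prod_def osc_def sc2_def sc1_def)

lemma omul_add_left: "omul \<alpha> \<beta> \<gamma> (x + y) z = omul \<alpha> \<beta> \<gamma> x z + omul \<alpha> \<beta> \<gamma> y z"
  by (cases x rule: oct_cases; cases y rule: oct_cases; cases z rule: oct_cases)
     (simp add: oct_defs algebra_simps)

lemma omul_add_right: "omul \<alpha> \<beta> \<gamma> z (x + y) = omul \<alpha> \<beta> \<gamma> z x + omul \<alpha> \<beta> \<gamma> z y"
  by (cases x rule: oct_cases; cases y rule: oct_cases; cases z rule: oct_cases)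
     (simp add: oct_defs algebra_simps)

lemma omul_osc_left: "omul \<alpha> \<beta> \<gamma> (osc c x) z = osc c (omul \<alpha> \<beta> \<gamma> x z)"
  by (cases x rule: oct_cases; cases z rule: oct_cases) (simp add: oct_defs algebra_simps)

lemma omul_osc_right: "omul \<alpha> \<beta> \<gamma> z (osc c x) = osc c (omul \<alpha> \<beta> \<gamma> z x)"
  by (cases x rule: oct_cases; cases z rule: oct_cases) (simp add: oct_defs algebra_simps)

lemma omul_0 [simp]: "omul \<alpha> \<beta> \<gamma> 0 z = 0" "omul \<alpha> \<beta> \<gamma> z 0 = 0"
  by (cases z rule: oct_cases, simp add: oct_defs)+

lemma omul_sum_left: "omul \<alpha> \<beta> \<gamma> (sum f A) r = (\<Sum>a\<in>A. omul \<alpha> \<beta> \<gamma> (f a) r)"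
  by (induction A rule: infinite_finite_induct) (auto simp: omul_add_left)

lemma omul_sum_right: "omul \<alpha> \<beta> \<gamma> r (sum f A) = (\<Sum>a\<in>A. omul \<alpha> \<beta> \<gamma> r (f a))"
  by (induction A rule: infinite_finite_induct) (auto simp: omul_add_right)

lemma osc_add: "osc c (x + y) = osc c x + osc c y"
  by (cases x rule: oct_cases; cases y rule: oct_cases) (simp add: oct_defs algebra_simps)

lemma osc_add_scalar: "osc (a + b) x = osc a x + osc b x"
  by (cases x rule: oct_cases) (simp add: oct_defs algebra_simps)

lemma osc_mult: "osc (a * b) x = osc a (osc b x)"
  by (cases x rule: oct_cases) (simp add: oct_defs algebra_simps)

lemma osc_0 [simp]: "osc 0 x = 0" "osc c 0 = 0"
  by (cases x rule: oct_cases, simp add: oct_defs)+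

lemma osc_minus_one: "osc (-1) x = - x"
  by (cases x rule: oct_cases) (simp add: oct_defs)

lemma osc_sum: "osc c (sum f A) = (\<Sum>a\<in>A. osc c (f a))"
  by (induction A rule: infinite_finite_induct) (auto simp: osc_add)

interpretation osc: scalar_action osc
  by unfold_locales (simp_all add: osc_add_scalar)

section \<open>The group \<open>\<int>\<^sub>2\<^sup>3\<close> and the signs of the structure constants\<close>

lemma gadd_assoc: "gadd (gadd x y) z = gadd x (gadd y z)"
  by (auto simp: gadd_def)

lemma gadd_comm: "gadd x y = gadd y x"
  by (auto simp: gadd_def)

lemma gadd_left_comm: "gadd x (gadd y z) = gadd y (gadd x z)"
  by (auto simp: gadd_def)

lemmas gadd_ac = gadd_assoc gadd_comm gadd_left_comm

lemma gadd_self [simp]: "gadd x x = gzero"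
  by (auto simp: gadd_def gzero_def)

lemma gadd_left_self [simp]: "gadd x (gadd x y) = y"
  by (auto simp: gadd_def prod_eq_iff)

lemma gadd_gzero [simp]: "gadd gzero x = x" "gadd x gzero = x"
  by (auto simp: gadd_def gzero_def)

lemma gen_subgroup_triple:
  "gen_subgroup {a, b, c} = {gzero, a, b, c, gadd a b, gadd a c, gadd b c, gadd (gadd a b) c}"
proof
  show "gen_subgroup {a, b, c} \<subseteq> {gzero, a, b, c, gadd a b, gadd a c, gadd b c, gadd (gadd a b) c}"
  proof
    fix x assume "x \<in> gen_subgroup {a, b, c}"
    then show "x \<in> {gzero, a, b, c, gadd a b, gadd a c, gadd b c, gadd (gadd a b) c}"
    proof induction
      case (gen_add x y)
      from gen_add.IH show ?case
        by (simp only: insert_iff empty_iff) (elim disjE; simp add: gadd_ac)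
    qed auto
  qed
  have "a \<in> gen_subgroup {a, b, c}" "b \<in> gen_subgroup {a, b, c}" "c \<in> gen_subgroup {a, b, c}"
    by (auto intro: gen_subgroup.gen_base)
  then show "{gzero, a, b, c, gadd a b, gadd a c, gadd b c, gadd (gadd a b) c} \<subseteq> gen_subgroup {a, b, c}"
    by (simp add: gen_subgroup.gen_add gen_subgroup.gen_zero)
qed

lemma gen_subgroup_pair: "gen_subgroup {a, b} = {gzero, a, b, gadd a b}"
  using gen_subgroup_triple[of a b b] by (simp add: gadd_ac) auto

lemma card_z2_3: "card (UNIV :: z2_3 set) = 8"
  by (simp add: UNIV_Times_UNIV[symmetric] card_cartesian_product del: UNIV_Times_UNIV)

lemma gen_subgroup_eq_UNIV_iff_card: "gen_subgroup A = UNIV \<longleftrightarrow> card (gen_subgroup A) = 8"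
  by (metis card_z2_3 card_subset_eq finite_code top_greatest)

lemma card_gen_subgroup_pair_cases:
  "card (gen_subgroup {a, b}) \<le> 2 \<or> card (gen_subgroup {a, b}) \<ge> 4"
proof -
  have "\<forall>a b. card (gen_subgroup {a, b}) \<le> 2 \<or> card (gen_subgroup {a, b}) \<ge> 4"
    unfolding gen_subgroup_pair all_z2_3 all_bool_eq by (simp add: gadd_def gzero_def card_insert_if)
  then show ?thesis by blast
qed

lemma card_gen_subgroup_triple_cases:
  "card (gen_subgroup {a, b, c}) \<le> 4 \<or> gen_subgroup {a, b, c} = UNIV"
proof -
  have "\<forall>a b c. card (gen_subgroup {a, b, c}) \<le> 4 \<or> card (gen_subgroup {a, b, c}) = 8"
    unfolding gen_subgroup_triple all_z2_3 all_bool_eq by (simp add: gadd_def gzero_def card_insert_if)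
  then show ?thesis unfolding gen_subgroup_eq_UNIV_iff_card by blast
qed

lemma oct_const_comm:
  "card (gen_subgroup {a, b}) \<le> 2 \<Longrightarrow> oct_const \<alpha> \<beta> \<gamma> a b = oct_const \<alpha> \<beta> \<gamma> b a"
proof -
  have "\<forall>a b. card (gen_subgroup {a, b}) \<le> 2 \<longrightarrow> oct_const \<alpha> \<beta> \<gamma> a b = oct_const \<alpha> \<beta> \<gamma> b a"
    unfolding gen_subgroup_pair all_z2_3 all_bool_eq oct_const_def
    by (simp add: oct_defs gzero_def card_insert_if)
  then show "card (gen_subgroup {a, b}) \<le> 2 \<Longrightarrow> ?thesis" by blast
qed

lemma oct_const_anticomm:
  "card (gen_subgroup {a, b}) \<ge> 4 \<Longrightarrow> oct_const \<alpha> \<beta> \<gamma> a b = - oct_const \<alpha> \<beta> \<gamma> b a"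
proof -
  have "\<forall>a b. card (gen_subgroup {a, b}) \<ge> 4 \<longrightarrow> oct_const \<alpha> \<beta> \<gamma> a b = - oct_const \<alpha> \<beta> \<gamma> b a"
    unfolding gen_subgroup_pair all_z2_3 all_bool_eq oct_const_def
    by (simp add: oct_defs gzero_def card_insert_if)
  then show "card (gen_subgroup {a, b}) \<ge> 4 \<Longrightarrow> ?thesis" by blast
qed

lemma oct_const_assoc:
  "card (gen_subgroup {a, b, c}) \<le> 4 \<Longrightarrow>
   oct_const \<alpha> \<beta> \<gamma> a b * oct_const \<alpha> \<beta> \<gamma> (gadd a b) c
   = oct_const \<alpha> \<beta> \<gamma> b c * oct_const \<alpha> \<beta> \<gamma> a (gadd b c)"
proof -
  have "\<forall>a b c. card (gen_subgroup {a, b, c}) \<le> 4 \<longrightarrow>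
     oct_const \<alpha> \<beta> \<gamma> a b * oct_const \<alpha> \<beta> \<gamma> (gadd a b) c
     = oct_const \<alpha> \<beta> \<gamma> b c * oct_const \<alpha> \<beta> \<gamma> a (gadd b c)"
    unfolding gen_subgroup_triple all_z2_3 all_bool_eq oct_const_def
    by (simp add: oct_defs gzero_def card_insert_if)
  then show "card (gen_subgroup {a, b, c}) \<le> 4 \<Longrightarrow> ?thesis" by blast
qed

lemma oct_const_antiassoc:
  "gen_subgroup {a, b, c} = UNIV \<Longrightarrow>
   oct_const \<alpha> \<beta> \<gamma> a b * oct_const \<alpha> \<beta> \<gamma> (gadd a b) c
   = - (oct_const \<alpha> \<beta> \<gamma> b c * oct_const \<alpha> \<beta> \<gamma> a (gadd b c))"
proof -
  have "\<forall>a b c. card (gen_subgroup {a, b, c}) = 8 \<longrightarrow>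
     oct_const \<alpha> \<beta> \<gamma> a b * oct_const \<alpha> \<beta> \<gamma> (gadd a b) c
     = - (oct_const \<alpha> \<beta> \<gamma> b c * oct_const \<alpha> \<beta> \<gamma> a (gadd b c))"
    unfolding gen_subgroup_triple all_z2_3 all_bool_eq oct_const_def
    by (simp add: oct_defs gzero_def card_insert_if)
  then show "gen_subgroup {a, b, c} = UNIV \<Longrightarrow> ?thesis"
    unfolding gen_subgroup_eq_UNIV_iff_card by blast
qed

lemma omul_obasis_comm:
  "card (gen_subgroup {a, b}) \<le> 2 \<Longrightarrow>
   omul \<alpha> \<beta> \<gamma> (obasis a s) (obasis b r) = omul \<alpha> \<beta> \<gamma> (obasis b r) (obasis a s)"
  using oct_const_comm[of a b \<alpha> \<beta> \<gamma>] by (simp add: omul_obasis gadd_comm mult.commute)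

lemma omul_obasis_anticomm:
  "card (gen_subgroup {a, b}) \<ge> 4 \<Longrightarrow>
   omul \<alpha> \<beta> \<gamma> (obasis a s) (obasis b r) = - omul \<alpha> \<beta> \<gamma> (obasis b r) (obasis a s)"
  using oct_const_anticomm[of a b \<alpha> \<beta> \<gamma>]
  by (simp add: omul_obasis obasis_uminus gadd_comm mult.commute)

lemma omul_obasis_assoc:
  assumes "card (gen_subgroup {a, b, c}) \<le> 4"
  shows "omul \<alpha> \<beta> \<gamma> (omul \<alpha> \<beta> \<gamma> (obasis a s) (obasis b r)) (obasis c t)
       = omul \<alpha> \<beta> \<gamma> (obasis a s) (omul \<alpha> \<beta> \<gamma> (obasis b r) (obasis c t))"
proof -
  let ?k = "oct_const \<alpha> \<beta> \<gamma>"
  have "?k (gadd a b) c * (?k a b * (s * r) * t) = (?k a b * ?k (gadd a b) c) * (s * r * t)"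
    by (simp only: ac_simps)
  also have "\<dots> = (?k b c * ?k a (gadd b c)) * (s * r * t)"
    by (simp only: oct_const_assoc[OF assms])
  also have "\<dots> = ?k a (gadd b c) * (s * (?k b c * (r * t)))"
    by (simp only: ac_simps)
  finally show ?thesis by (simp only: omul_obasis gadd_assoc)
qed

lemma omul_obasis_antiassoc:
  assumes "gen_subgroup {a, b, c} = UNIV"
  shows "omul \<alpha> \<beta> \<gamma> (omul \<alpha> \<beta> \<gamma> (obasis a s) (obasis b r)) (obasis c t)
       = - omul \<alpha> \<beta> \<gamma> (obasis a s) (omul \<alpha> \<beta> \<gamma> (obasis b r) (obasis c t))"
proof -
  let ?k = "oct_const \<alpha> \<beta> \<gamma>"
  have "?k (gadd a b) c * (?k a b * (s * r) * t) = (?k a b * ?k (gadd a b) c) * (s * r * t)"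
    by (simp only: ac_simps)
  also have "\<dots> = - (?k b c * ?k a (gadd b c)) * (s * r * t)"
    by (simp only: oct_const_antiassoc[OF assms])
  also have "\<dots> = - (?k a (gadd b c) * (s * (?k b c * (r * t))))"
    by (simp add: ac_simps)
  finally show ?thesis by (simp only: omul_obasis obasis_uminus gadd_assoc)
qed

lemma oeval_eq_lin_ext: "oeval \<alpha> \<beta> \<gamma> \<nu> p = lin_ext osc (oeval_mon \<alpha> \<beta> \<gamma> \<nu>) p"
  by (simp add: oeval_def lin_ext_def)

lemma oeval_0 [simp]: "oeval \<alpha> \<beta> \<gamma> \<nu> 0 = 0"
  by (simp add: oeval_eq_lin_ext)

lemma oeval_add: "oeval \<alpha> \<beta> \<gamma> \<nu> (p + q) = oeval \<alpha> \<beta> \<gamma> \<nu> p + oeval \<alpha> \<beta> \<gamma> \<nu> q"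
  unfolding oeval_eq_lin_ext by (rule osc.lin_ext_add)

lemma oeval_sum: "oeval \<alpha> \<beta> \<gamma> \<nu> (sum f A) = (\<Sum>a\<in>A. oeval \<alpha> \<beta> \<gamma> \<nu> (f a))"
  unfolding oeval_eq_lin_ext by (rule osc.lin_ext_sum)

lemma oeval_single: "oeval \<alpha> \<beta> \<gamma> \<nu> (Poly_Mapping.single m a) = osc a (oeval_mon \<alpha> \<beta> \<gamma> \<nu> m)"
  unfolding oeval_eq_lin_ext by (rule osc.lin_ext_single)

lemma oeval_psc: "oeval \<alpha> \<beta> \<gamma> \<nu> (psc c p) = osc c (oeval \<alpha> \<beta> \<gamma> \<nu> p)"
  unfolding oeval_eq_lin_ext by (rule osc.lin_ext_psc) (auto simp: osc_mult osc_add)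

lemma oeval_diff: "oeval \<alpha> \<beta> \<gamma> \<nu> (p - q) = oeval \<alpha> \<beta> \<gamma> \<nu> p - oeval \<alpha> \<beta> \<gamma> \<nu> q"
proof -
  have "p - q = p + psc (-1) q" by (simp add: psc_minus_one)
  then show ?thesis by (simp only: oeval_add oeval_psc) (simp add: osc_minus_one)
qed

lemma oeval_pvar: "oeval \<alpha> \<beta> \<gamma> \<nu> (pvar v) = \<nu> v"
  by (simp add: pvar_def oeval_single) (cases "\<nu> v" rule: oct_cases, simp add: oct_defs)

lemma oeval_pmul:
  "oeval \<alpha> \<beta> \<gamma> \<nu> (pmul p q) = omul \<alpha> \<beta> \<gamma> (oeval \<alpha> \<beta> \<gamma> \<nu> p) (oeval \<alpha> \<beta> \<gamma> \<nu> q)"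
proof -
  have "oeval \<alpha> \<beta> \<gamma> \<nu> (pmul p q) = (\<Sum>m\<in>Poly_Mapping.keys p. \<Sum>n\<in>Poly_Mapping.keys q.
      osc (Poly_Mapping.lookup p m * Poly_Mapping.lookup q n)
        (omul \<alpha> \<beta> \<gamma> (oeval_mon \<alpha> \<beta> \<gamma> \<nu> m) (oeval_mon \<alpha> \<beta> \<gamma> \<nu> n)))"
    unfolding pmul_def[of p q] oeval_sum oeval_single by (simp only: oeval_mon.simps)
  also have "\<dots> = omul \<alpha> \<beta> \<gamma> (oeval \<alpha> \<beta> \<gamma> \<nu> p) (oeval \<alpha> \<beta> \<gamma> \<nu> q)"
    unfolding oeval_def omul_sum_left
    unfolding omul_sum_right omul_osc_left omul_osc_right osc_mult
    by (simp add: osc_mult[symmetric] mult.commute osc_sum)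
  finally show ?thesis .
qed

lemma oeval_psubst:
  "oeval \<alpha> \<beta> \<gamma> \<nu> (psubst \<sigma> p) = oeval \<alpha> \<beta> \<gamma> (\<lambda>v. oeval \<alpha> \<beta> \<gamma> \<nu> (\<sigma> v)) p"
proof -
  have "oeval \<alpha> \<beta> \<gamma> \<nu> (subst_mon \<sigma> m) = oeval_mon \<alpha> \<beta> \<gamma> (\<lambda>v. oeval \<alpha> \<beta> \<gamma> \<nu> (\<sigma> v)) m" for m
    by (induction m) (auto simp: oeval_pmul)
  then show ?thesis
    unfolding psubst_def lin_ext_def oeval_sum oeval_psc by (simp add: oeval_def)
qed

lemma ohom_oeval:
  assumes "\<And>v. ohom (snd v) (\<nu> v)" and "phom a p"
  shows "ohom a (oeval \<alpha> \<beta> \<gamma> \<nu> p)"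
proof -
  have "ohom (mdeg m) (oeval_mon \<alpha> \<beta> \<gamma> \<nu> m)" for m
    using assms(1) by (induction m) (auto simp: ohom_iff_obasis omul_obasis)
  then obtain s where s: "\<And>m. m \<in> Poly_Mapping.keys p \<Longrightarrow> oeval_mon \<alpha> \<beta> \<gamma> \<nu> m = obasis a (s m)"
    using assms(2) unfolding phom_def ohom_iff_obasis by metis
  have "oeval \<alpha> \<beta> \<gamma> \<nu> p = obasis a (\<Sum>m\<in>Poly_Mapping.keys p. Poly_Mapping.lookup p m * s m)"
    unfolding oeval_def obasis_sum[symmetric] by (intro sum.cong refl) (simp add: s osc_obasis)
  then show ?thesis using ohom_iff_obasis by blast
qed

lemma graded_T_idealD:
  assumes "graded_T_ideal I"
  shows "0 \<in> I" and "p \<in> I \<Longrightarrow> q \<in> I \<Longrightarrow> p + q \<in> I" and "p \<in> I \<Longrightarrow> psc c p \<in> I"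
    and "p \<in> I \<Longrightarrow> pmul p q \<in> I" and "p \<in> I \<Longrightarrow> pmul q p \<in> I"
    and "graded_endo \<phi> \<Longrightarrow> p \<in> I \<Longrightarrow> \<phi> p \<in> I"
  using assms unfolding graded_T_ideal_def ideal_fp_def by blast+

lemma graded_T_ideal_diff:
  assumes "graded_T_ideal I" "p \<in> I" "q \<in> I"
  shows "p - q \<in> I"
proof -
  have "p + psc (-1) q \<in> I"
    using assms by (intro graded_T_idealD(2,3))
  then show ?thesis by (simp add: psc_minus_one)
qed

lemma graded_T_ideal_sum:
  "graded_T_ideal I \<Longrightarrow> (\<And>a. a \<in> A \<Longrightarrow> h a \<in> I) \<Longrightarrow> sum h A \<in> I"
  by (induction A rule: infinite_finite_induct) (auto simp: graded_T_idealD(1,2))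

lemma graded_T_ideal_T_oct: "graded_T_ideal (T_oct \<alpha> \<beta> \<gamma>)"
  unfolding graded_T_ideal_def ideal_fp_def
proof (intro conjI ballI allI impI subsetI)
  fix \<phi> :: "'a fpoly \<Rightarrow> 'a fpoly" and g
  assume \<phi>: "graded_endo \<phi>" and "g \<in> \<phi> ` T_oct \<alpha> \<beta> \<gamma>"
  then obtain f where f: "f \<in> T_oct \<alpha> \<beta> \<gamma>" and g: "g = \<phi> f" by auto
  show "g \<in> T_oct \<alpha> \<beta> \<gamma>"
    unfolding T_oct_def
  proof (intro CollectI allI impI)
    fix \<nu> :: "gvar \<Rightarrow> 'a oct" assume \<nu>: "\<forall>v. ohom (snd v) (\<nu> v)"
    have "\<forall>v. ohom (snd v) (oeval \<alpha> \<beta> \<gamma> \<nu> (\<phi> (pvar v)))"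
      using \<nu> \<phi> ohom_oeval unfolding graded_endo_def by blast
    then have "oeval \<alpha> \<beta> \<gamma> (\<lambda>v. oeval \<alpha> \<beta> \<gamma> \<nu> (\<phi> (pvar v))) f = 0"
      using f by (simp add: T_oct_def)
    then show "oeval \<alpha> \<beta> \<gamma> \<nu> g = 0"
      by (simp add: g graded_endo_eq_psubst[OF \<phi>, of f] oeval_psubst)
  qed
qed (simp_all add: T_oct_def oeval_add oeval_psc oeval_pmul)

lemma T_oct_iff_obasis:
  "f \<in> T_oct \<alpha> \<beta> \<gamma> \<longleftrightarrow> (\<forall>t. oeval \<alpha> \<beta> \<gamma> (\<lambda>v. obasis (snd v) (t v)) f = 0)"
proof -
  have "(\<forall>v. ohom (snd v) (\<nu> v)) \<longleftrightarrow> (\<exists>t. \<nu> = (\<lambda>v. obasis (snd v) (t v)))" for \<nu> :: "gvar \<Rightarrow> 'a oct"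
    unfolding ohom_iff_obasis by metis
  then show ?thesis unfolding T_oct_def by auto
qed

lemma oct_gens_memI:
  shows "u \<noteq> v \<Longrightarrow> card (gen_subgroup {snd u, snd v}) \<le> 2 \<Longrightarrow>
      pcomm (pvar u) (pvar v) \<in> oct_gens"
    and "u \<noteq> v \<Longrightarrow> card (gen_subgroup {snd u, snd v}) \<ge> 4 \<Longrightarrow>
      pjordan (pvar u) (pvar v) \<in> oct_gens"
    and "u \<noteq> v \<Longrightarrow> u \<noteq> w \<Longrightarrow> v \<noteq> w \<Longrightarrow> card (gen_subgroup {snd u, snd v, snd w}) \<le> 4 \<Longrightarrow>
      passoc (pvar u) (pvar v) (pvar w) \<in> oct_gens"
    and "u \<noteq> v \<Longrightarrow> u \<noteq> w \<Longrightarrow> v \<noteq> w \<Longrightarrow> gen_subgroup {snd u, snd v, snd w} = UNIV \<Longrightarrow>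
      pmul (pmul (pvar u) (pvar v)) (pvar w) + pmul (pvar u) (pmul (pvar v) (pvar w)) \<in> oct_gens"
  unfolding oct_gens_def by blast+

lemma oct_gens_subset_T_oct: "oct_gens \<subseteq> T_oct \<alpha> \<beta> \<gamma>"
proof
  fix f :: "'a fpoly" assume "f \<in> oct_gens"
  then consider
      (comm) u v where "f = pcomm (pvar u) (pvar v)" "card (gen_subgroup {snd u, snd v}) \<le> 2"
    | (anticomm) u v where "f = pjordan (pvar u) (pvar v)" "card (gen_subgroup {snd u, snd v}) \<ge> 4"
    | (assoc) u v w where "f = passoc (pvar u) (pvar v) (pvar w)"
        "card (gen_subgroup {snd u, snd v, snd w}) \<le> 4"
    | (antiassoc) u v w
      where "f = pmul (pmul (pvar u) (pvar v)) (pvar w) + pmul (pvar u) (pmul (pvar v) (pvar w))"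
        "gen_subgroup {snd u, snd v, snd w} = UNIV"
    unfolding oct_gens_def by blast
  then show "f \<in> T_oct \<alpha> \<beta> \<gamma>"
  proof cases
    case comm
    then show ?thesis
      unfolding T_oct_iff_obasis \<comment> \<open>\<open>omul_obasis_comm\<close> is permutative, so simp would not use it\<close>
      by (simp add: pcomm_def oeval_diff oeval_pmul oeval_pvar) (intro allI omul_obasis_comm[OF comm(2)])
  next
    case anticomm
    then show ?thesis
      unfolding T_oct_iff_obasis by (simp add: pjordan_def oeval_add oeval_pmul oeval_pvar omul_obasis_anticomm)
  next
    case assoc
    then show ?thesis
      unfolding T_oct_iff_obasis by (simp add: passoc_def oeval_diff oeval_pmul oeval_pvar omul_obasis_assoc)
  next
    case antiassoc
    then show ?thesis
      unfolding T_oct_iff_obasis by (simp add: oeval_add oeval_pmul oeval_pvar omul_obasis_antiassoc)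
  qed
qed

lemma graded_T_ideal_T_generated: "graded_T_ideal (T_generated S)"
proof -
  let ?F = "{I. graded_T_ideal I \<and> S \<subseteq> I}"
  have F: "graded_T_ideal I" if "I \<in> ?F" for I
    using that by blast
  have "ideal_fp (\<Inter> ?F)"
    unfolding ideal_fp_def using F by (auto intro: graded_T_idealD)
  moreover have "\<phi> ` \<Inter> ?F \<subseteq> \<Inter> ?F" if "graded_endo \<phi>" for \<phi>
    using F that by (auto intro: graded_T_idealD)
  ultimately show ?thesis
    unfolding T_generated_def graded_T_ideal_def by blast
qed

lemma T_generated_subset: "S \<subseteq> T_generated S"
  unfolding T_generated_def by blast

lemma T_generated_least: "graded_T_ideal J \<Longrightarrow> S \<subseteq> J \<Longrightarrow> T_generated S \<subseteq> J"
  unfolding T_generated_def by blast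

definition proportional :: "'a::field fpoly set \<Rightarrow> gvar mon \<Rightarrow> gvar mon \<Rightarrow> bool" where
  "proportional I m n \<longleftrightarrow> (\<exists>c. c \<noteq> 0 \<and> pmon m - Poly_Mapping.single n c \<in> I)"

fun left_comb :: "'v mon \<Rightarrow> 'v list \<Rightarrow> 'v mon" where
  "left_comb P [] = P"
| "left_comb P (y # ys) = left_comb (Mul P (Var y)) ys"

lemma left_comb_append: "left_comb P (xs @ ys) = left_comb (left_comb P xs) ys"
  by (induction xs arbitrary: P) auto

lemma left_comb_snoc: "left_comb P (xs @ [y]) = Mul (left_comb P xs) (Var y)"
  by (simp add: left_comb_append)

definition left_normed :: "'v list \<Rightarrow> 'v mon" where
  "left_normed zs = left_comb (Var (hd zs)) (tl zs)"

lemma left_normed_snoc: "zs \<noteq> [] \<Longrightarrow> left_normed (zs @ [z]) = Mul (left_normed zs) (Var z)"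
  by (cases zs) (auto simp: left_normed_def left_comb_snoc)

locale oct_ideal =
  fixes I :: "'a::field fpoly set"
  assumes graded_T_ideal: "graded_T_ideal I" and oct_gens_subset: "oct_gens \<subseteq> I"
begin

lemmas I_zero = graded_T_idealD(1)[OF graded_T_ideal]
  and I_psc = graded_T_idealD(3)[OF graded_T_ideal]
  and I_pmul_left = graded_T_idealD(4)[OF graded_T_ideal]
  and I_pmul_right = graded_T_idealD(5)[OF graded_T_ideal]
  and I_endo = graded_T_idealD(6)[OF graded_T_ideal]
  and I_add = graded_T_idealD(2)[OF graded_T_ideal]
  and I_sum = graded_T_ideal_sum[OF graded_T_ideal]

abbreviation proportional_I (infix "\<approx>" 50) where "m \<approx> n \<equiv> proportional I m n"

lemma proportional_refl: "m \<approx> m"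
  unfolding proportional_def using I_zero by (intro exI[of _ 1]) simp

lemma proportional_sym: "m \<approx> n \<Longrightarrow> n \<approx> m"
proof -
  assume "m \<approx> n"
  then obtain c where c: "c \<noteq> 0" "pmon m - Poly_Mapping.single n c \<in> I"
    unfolding proportional_def by blast
  have "psc (- 1 / c) (pmon m - Poly_Mapping.single n c) = pmon n - Poly_Mapping.single m (1 / c)"
    using c(1) by (intro poly_mapping_eqI) (simp add: lookup_minus lookup_single when_def field_simps)
  moreover have "psc (- 1 / c) (pmon m - Poly_Mapping.single n c) \<in> I"
    by (rule I_psc[OF c(2)])
  ultimately show ?thesis
    unfolding proportional_def using c(1) by (intro exI[of _ "1 / c"]) auto
qed

lemma proportional_trans [trans]: "m \<approx> n \<Longrightarrow> n \<approx> k \<Longrightarrow> m \<approx> k"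
proof -
  assume "m \<approx> n" "n \<approx> k"
  then obtain c d where c: "c \<noteq> 0" "pmon m - Poly_Mapping.single n c \<in> I"
    and d: "d \<noteq> 0" "pmon n - Poly_Mapping.single k d \<in> I"
    unfolding proportional_def by blast
  have eq: "(pmon m - Poly_Mapping.single n c) + psc c (pmon n - Poly_Mapping.single k d)
      = pmon m - Poly_Mapping.single k (c * d)"
    by (intro poly_mapping_eqI) (simp add: lookup_minus lookup_add lookup_single when_def algebra_simps)
  have "(pmon m - Poly_Mapping.single n c) + psc c (pmon n - Poly_Mapping.single k d) \<in> I"
    by (rule I_add[OF c(2) I_psc[OF d(2)]])
  then show ?thesis
    unfolding proportional_def eq using c(1) d(1) by (intro exI[of _ "c * d"]) auto
qed

lemma proportional_Mul:
  assumes "m \<approx> n"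
  shows "Mul m k \<approx> Mul n k" and "Mul k m \<approx> Mul k n"
proof -
  obtain c where c: "c \<noteq> 0" "pmon m - Poly_Mapping.single n c \<in> I"
    using assms unfolding proportional_def by blast
  have "pmul (pmon m - Poly_Mapping.single n c) (pmon k) =
      pmon (Mul m k) - Poly_Mapping.single (Mul n k) c"
    and "pmul (pmon k) (pmon m - Poly_Mapping.single n c) =
      pmon (Mul k m) - Poly_Mapping.single (Mul k n) c"
    by (simp_all add: pmul_diff_left pmul_diff_right pmul_single)
  then show "Mul m k \<approx> Mul n k" and "Mul k m \<approx> Mul k n"
    unfolding proportional_def using I_pmul_left[OF c(2)] I_pmul_right[OF c(2)] c(1) by metis+
qed

lemma proportional_commute: "Mul u w \<approx> Mul w u"
proof -
  define x y where "x = (0::nat, mdeg u)" and "y = (1::nat, mdeg w)"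
  define \<rho> where "\<rho> v = (if v = x then u else if v = y then w else Var v)" for v
  let ?\<phi> = "psubst (\<lambda>v. pmon (\<rho> v)) :: 'a fpoly \<Rightarrow> 'a fpoly"
  have \<phi>: "graded_endo ?\<phi>"
    by (rule graded_endo_psubst_pmon) (simp add: \<rho>_def x_def y_def)
  have \<phi>_xy: "?\<phi> (pvar x) = pmon u" "?\<phi> (pvar y) = pmon w"
    by (simp_all add: psubst_pvar \<rho>_def x_def y_def)
  have "x \<noteq> y" by (simp add: x_def y_def)
  consider "card (gen_subgroup {snd x, snd y}) \<le> 2" | "card (gen_subgroup {snd x, snd y}) \<ge> 4"
    using card_gen_subgroup_pair_cases by blast
  then show ?thesis
  proof cases
    case 1
    then have "pcomm (pvar x) (pvar y) \<in> I"
      using \<open>x \<noteq> y\<close> oct_gens_subset oct_gens_memI by blast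
    from I_endo[OF \<phi> this] show ?thesis
      unfolding proportional_def
      by (intro exI[of _ 1]) (simp add: pcomm_def psubst_diff psubst_pmul \<phi>_xy pmul_single)
  next
    case 2
    then have "pjordan (pvar x) (pvar y) \<in> I"
      using \<open>x \<noteq> y\<close> oct_gens_subset oct_gens_memI by blast
    from I_endo[OF \<phi> this] show ?thesis
      unfolding proportional_def
      by (intro exI[of _ "-1"]) (simp add: pjordan_def psubst_add psubst_pmul \<phi>_xy pmul_single single_uminus)
  qed
qed

lemma proportional_assoc: "Mul (Mul u v) w \<approx> Mul u (Mul v w)"
proof -
  define x y z where "x = (0::nat, mdeg u)" and "y = (1::nat, mdeg v)" and "z = (2::nat, mdeg w)"
  define \<rho> where "\<rho> r = (if r = x then u else if r = y then v else if r = z then w else Var r)" for r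
  let ?\<phi> = "psubst (\<lambda>r. pmon (\<rho> r)) :: 'a fpoly \<Rightarrow> 'a fpoly"
  have \<phi>: "graded_endo ?\<phi>"
    by (rule graded_endo_psubst_pmon) (simp add: \<rho>_def x_def y_def z_def)
  have \<phi>_xyz: "?\<phi> (pvar x) = pmon u" "?\<phi> (pvar y) = pmon v" "?\<phi> (pvar z) = pmon w"
    by (simp_all add: psubst_pvar \<rho>_def x_def y_def z_def)
  have "x \<noteq> y" "x \<noteq> z" "y \<noteq> z" by (simp_all add: x_def y_def z_def)
  consider "card (gen_subgroup {snd x, snd y, snd z}) \<le> 4" | "gen_subgroup {snd x, snd y, snd z} = UNIV"
    using card_gen_subgroup_triple_cases by blast
  then show ?thesis
  proof cases
    case 1
    then have "passoc (pvar x) (pvar y) (pvar z) \<in> I"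
      using \<open>x \<noteq> y\<close> \<open>x \<noteq> z\<close> \<open>y \<noteq> z\<close> oct_gens_subset oct_gens_memI by blast
    from I_endo[OF \<phi> this] show ?thesis
      unfolding proportional_def
      by (intro exI[of _ 1]) (simp add: passoc_def psubst_diff psubst_pmul \<phi>_xyz pmul_single)
  next
    case 2
    then have "pmul (pmul (pvar x) (pvar y)) (pvar z) + pmul (pvar x) (pmul (pvar y) (pvar z)) \<in> I"
      using \<open>x \<noteq> y\<close> \<open>x \<noteq> z\<close> \<open>y \<noteq> z\<close> oct_gens_subset oct_gens_memI by blast
    from I_endo[OF \<phi> this] show ?thesis
      unfolding proportional_def
      by (intro exI[of _ "-1"]) (simp add: psubst_add psubst_pmul \<phi>_xyz pmul_single single_uminus)
  qed
qed

lemma proportional_left_comb: "P \<approx> Q \<Longrightarrow> left_comb P ys \<approx> left_comb Q ys"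
  by (induction ys arbitrary: P Q) (auto intro: proportional_Mul)

lemma proportional_Mul_left_comb: "Mul P (left_comb (Var y) ys) \<approx> left_comb P (y # ys)"
proof (induction ys rule: rev_induct)
  case Nil
  then show ?case by (simp add: proportional_refl)
next
  case (snoc y' ys)
  have "Mul P (left_comb (Var y) (ys @ [y'])) \<approx> Mul (Mul P (left_comb (Var y) ys)) (Var y')"
    unfolding left_comb_snoc by (rule proportional_sym[OF proportional_assoc])
  also have "\<dots> \<approx> Mul (left_comb P (y # ys)) (Var y')"
    by (rule proportional_Mul(1)[OF snoc.IH])
  finally show ?case
    using left_comb_snoc[of P "y # ys" y'] by simp
qed

lemma proportional_left_comb_leaves: "\<exists>x xs. leaves m = x # xs \<and> m \<approx> left_comb (Var x) xs"
proof (induction m)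
  case (Var v)
  then show ?case by (auto simp: proportional_refl)
next
  case (Mul u w)
  obtain x xs where u: "leaves u = x # xs" "u \<approx> left_comb (Var x) xs"
    using Mul.IH(1) by blast
  obtain y ys where w: "leaves w = y # ys" "w \<approx> left_comb (Var y) ys"
    using Mul.IH(2) by blast
  have "Mul u w \<approx> Mul (left_comb (Var x) xs) w"
    by (rule proportional_Mul(1)[OF u(2)])
  also have "\<dots> \<approx> Mul (left_comb (Var x) xs) (left_comb (Var y) ys)"
    by (rule proportional_Mul(2)[OF w(2)])
  also have "\<dots> \<approx> left_comb (left_comb (Var x) xs) (y # ys)"
    by (rule proportional_Mul_left_comb)
  finally have "Mul u w \<approx> left_comb (Var x) (xs @ y # ys)"
    by (simp add: left_comb_append)
  then show ?case using u(1) w(1) by auto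
qed

lemma proportional_left_normed_swap:
  "left_normed (xs @ a # b # ys) \<approx> left_normed (xs @ b # a # ys)"
proof (cases xs)
  case Nil
  then show ?thesis
    by (simp add: left_normed_def proportional_left_comb proportional_commute)
next
  case (Cons x xs')
  have "Mul (Mul R (Var a)) (Var b) \<approx> Mul (Mul R (Var b)) (Var a)" for R
  proof -
    have "Mul (Mul R (Var a)) (Var b) \<approx> Mul R (Mul (Var a) (Var b))"
      by (rule proportional_assoc)
    also have "\<dots> \<approx> Mul R (Mul (Var b) (Var a))"
      by (rule proportional_Mul(2)[OF proportional_commute])
    also have "\<dots> \<approx> Mul (Mul R (Var b)) (Var a)"
      by (rule proportional_sym[OF proportional_assoc])
    finally show ?thesis .
  qed
  then show ?thesis
    using Cons by (simp add: left_normed_def left_comb_append proportional_left_comb)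
qed

lemma proportional_left_normed_move_last:
  "left_normed (xs @ z # ys) \<approx> left_normed (xs @ ys @ [z])"
proof (induction ys arbitrary: xs)
  case Nil
  then show ?case by (simp add: proportional_refl)
next
  case (Cons y ys)
  have "left_normed (xs @ z # y # ys) \<approx> left_normed (xs @ y # z # ys)"
    by (rule proportional_left_normed_swap)
  also have "\<dots> \<approx> left_normed ((xs @ [y]) @ ys @ [z])"
    using Cons.IH[of "xs @ [y]"] by simp
  finally show ?case by simp
qed

lemma proportional_left_normed_perm:
  "zs \<noteq> [] \<Longrightarrow> mset zs = mset ws \<Longrightarrow> left_normed zs \<approx> left_normed ws"
proof (induction zs arbitrary: ws rule: rev_induct)
  case Nil
  then show ?case by simp
next
  case (snoc z zs)
  have "z \<in> set ws" using snoc.prems(2) by (metis mset_eq_setD in_set_conv_decomp)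
  then obtain w1 w2 where ws: "ws = w1 @ z # w2" by (metis split_list)
  have m: "mset zs = mset (w1 @ w2)" using snoc.prems(2) ws by simp
  show ?case
  proof (cases "zs = []")
    case True
    then show ?thesis using m ws by (simp add: proportional_refl)
  next
    case False
    then have "w1 @ w2 \<noteq> []" using m by auto
    have "left_normed (zs @ [z]) \<approx> Mul (left_normed (w1 @ w2)) (Var z)"
      unfolding left_normed_snoc[OF False] by (rule proportional_Mul(1)[OF snoc.IH[OF False m]])
    also have "Mul (left_normed (w1 @ w2)) (Var z) = left_normed (w1 @ w2 @ [z])"
      using left_normed_snoc[OF \<open>w1 @ w2 \<noteq> []\<close>, of z] by simp
    also have "\<dots> \<approx> left_normed ws"
      unfolding ws by (rule proportional_sym[OF proportional_left_normed_move_last])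
    finally show ?thesis .
  qed
qed

lemma proportional_if_mset_leaves_eq: "mset (leaves m) = mset (leaves n) \<Longrightarrow> m \<approx> n"
proof -
  assume eq: "mset (leaves m) = mset (leaves n)"
  obtain x xs where m: "leaves m = x # xs" "m \<approx> left_comb (Var x) xs"
    using proportional_left_comb_leaves by blast
  obtain y ys where n: "leaves n = y # ys" "n \<approx> left_comb (Var y) ys"
    using proportional_left_comb_leaves by blast
  have "left_normed (leaves m) \<approx> left_normed (leaves n)"
    by (rule proportional_left_normed_perm) (use eq m in auto)
  then have "left_comb (Var x) xs \<approx> left_comb (Var y) ys"
    using m n by (simp add: left_normed_def)
  then show ?thesis
    using m(2) n(2) by (meson proportional_sym proportional_trans)
qed

lemma congruent_inj_on_leaves:
  obtains g where "f - g \<in> I" and "inj_on (\<lambda>m. mset (leaves m)) (Poly_Mapping.keys g)"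
proof -
  define \<mu> where "\<mu> = (\<lambda>m :: gvar mon. mset (leaves m))"
  define r where "r X = (SOME m. m \<in> Poly_Mapping.keys f \<and> \<mu> m = X)" for X
  have r: "\<mu> (r (\<mu> m)) = \<mu> m" if "m \<in> Poly_Mapping.keys f" for m
    unfolding r_def by (rule someI2_ex) (use that in auto)
  have "\<exists>c. c \<noteq> 0 \<and> pmon m - Poly_Mapping.single (r (\<mu> m)) c \<in> I"
    if "m \<in> Poly_Mapping.keys f" for m
    using proportional_if_mset_leaves_eq[of m "r (\<mu> m)"] r[OF that]
    unfolding proportional_def \<mu>_def by simp
  then obtain c where c: "\<And>m. m \<in> Poly_Mapping.keys f \<Longrightarrow>
      pmon m - Poly_Mapping.single (r (\<mu> m)) (c m) \<in> I"
    by metis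
  define g where "g = (\<Sum>m\<in>Poly_Mapping.keys f.
      Poly_Mapping.single (r (\<mu> m)) (Poly_Mapping.lookup f m * c m))"
  have "f - g = (\<Sum>m\<in>Poly_Mapping.keys f.
      psc (Poly_Mapping.lookup f m) (pmon m - Poly_Mapping.single (r (\<mu> m)) (c m)))"
    unfolding g_def by (subst poly_mapping_sum_single[of f]) (simp add: psc_diff psc_single sum_subtractf)
  then have "f - g \<in> I"
    using c by (simp add: I_sum I_psc)
  moreover have "inj_on \<mu> (Poly_Mapping.keys g)"
  proof (rule inj_on_subset)
    show "inj_on \<mu> (r ` \<mu> ` Poly_Mapping.keys f)"
      by (rule inj_onI) (auto simp: r)
    show "Poly_Mapping.keys g \<subseteq> r ` \<mu> ` Poly_Mapping.keys f"
      unfolding g_def by (rule order.trans[OF keys_sum]) auto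
  qed
  ultimately show ?thesis using that unfolding \<mu>_def by blast
qed

end

section \<open>Polynomial functions over an infinite field\<close>

lemma coeff_eq_0_if_poly_fun_eq_0:
  fixes a :: "nat \<Rightarrow> 'a::field"
  assumes "infinite (UNIV :: 'a set)" and "finite S"
    and "\<And>s. (\<Sum>k\<in>S. a k * s ^ k) = 0" and "k \<in> S"
  shows "a k = 0"
proof -
  define p where "p = (\<Sum>j\<in>S. monom (a j) j)"
  have "poly p s = 0" for s
    unfolding p_def poly_sum by (simp add: poly_monom assms(3))
  then have "p = 0"
    using poly_roots_finite[of p] assms(1) by auto
  then show ?thesis
    using assms(2,4) coeff_sum[of "\<lambda>j. monom (a j) j" S k] by (simp add: p_def coeff_monom)
qed

lemma multiset_split_count: "X = filter_mset (\<lambda>v. v \<noteq> w) X + replicate_mset (count X w) w"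
  using multiset_partition[of X "\<lambda>v. v \<noteq> w"] filter_eq_replicate_mset[of w X] by simp

lemma prod_mset_image_fun_upd:
  "prod_mset (image_mset (t(w := s)) X)
   = prod_mset (image_mset t (filter_mset (\<lambda>v. v \<noteq> w) X)) * s ^ count X w"
proof -
  have "image_mset (t(w := s)) (filter_mset (\<lambda>v. v \<noteq> w) X)
      = image_mset t (filter_mset (\<lambda>v. v \<noteq> w) X)"
    by (rule image_mset_cong) auto
  then show ?thesis
    by (subst multiset_split_count[of X w]) (simp add: prod_mset_Un)
qed

text \<open>Monomials are represented by multisets of variables; the proof eliminates one variable
  at a time, grouping the monomials by the exponent of that variable.\<close>

lemma coeff_eq_0_if_multiset_poly_fun_eq_0:
  fixes e :: "'i \<Rightarrow> 'a::field" and \<mu> :: "'i \<Rightarrow> 'v multiset"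
  assumes inf: "infinite (UNIV :: 'a set)" and "finite A" and "inj_on \<mu> A"
    and "\<And>t. (\<Sum>j\<in>A. e j * prod_mset (image_mset t (\<mu> j))) = 0" and "i \<in> A"
  shows "e i = 0"
proof -
  define W where "W = (\<Union>j\<in>A. set_mset (\<mu> j))"
  have "finite W" "\<forall>j\<in>A. set_mset (\<mu> j) \<subseteq> W"
    using assms(2) by (auto simp: W_def)
  then show ?thesis
    using assms(2-5)
  proof (induction W arbitrary: A \<mu> i rule: finite_induct)
    case empty
    have "A \<subseteq> {i}"
    proof
      fix j assume "j \<in> A"
      then have "\<mu> j = \<mu> i" using empty.prems(1,5) by simp
      then show "j \<in> {i}" using \<open>j \<in> A\<close> empty.prems(3,5) by (simp add: inj_on_eq_iff)
    qed
    then have "A = {i}" using empty.prems(5) by blast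
    then show ?case
      using empty.prems(4)[of "\<lambda>_. 1"] by simp
  next
    case (insert w W)
    define \<mu>' where "\<mu>' j = filter_mset (\<lambda>v. v \<noteq> w) (\<mu> j)" for j
    define G where "G = {j \<in> A. count (\<mu> j) w = count (\<mu> i) w}"
    have "(\<Sum>j\<in>G. e j * prod_mset (image_mset t (\<mu>' j))) = 0" for t
    proof -
      let ?n = "\<lambda>j. count (\<mu> j) w"
      have "(\<Sum>n\<in>?n ` A. (\<Sum>j\<in>{j \<in> A. ?n j = n}. e j * prod_mset (image_mset t (\<mu>' j))) * s ^ n) = 0"
        for s
      proof -
        have "(\<Sum>n\<in>?n ` A. (\<Sum>j\<in>{j \<in> A. ?n j = n}. e j * prod_mset (image_mset t (\<mu>' j))) * s ^ n)
            = (\<Sum>n\<in>?n ` A. \<Sum>j\<in>{j \<in> A. ?n j = n}. e j * prod_mset (image_mset t (\<mu>' j)) * s ^ ?n j)"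
          by (intro sum.cong refl) (simp add: sum_distrib_right)
        also have "\<dots> = (\<Sum>j\<in>A. e j * prod_mset (image_mset t (\<mu>' j)) * s ^ ?n j)"
          by (rule sum.image_gen[OF insert.prems(2), symmetric])
        also have "\<dots> = 0"
          using insert.prems(4)[of "t(w := s)"]
          unfolding prod_mset_image_fun_upd by (simp add: \<mu>'_def mult.assoc)
        finally show ?thesis .
      qed
      from coeff_eq_0_if_poly_fun_eq_0[OF inf _ this, of "count (\<mu> i) w"] insert.prems(2,5)
      show ?thesis by (simp add: G_def)
    qed
    moreover have "inj_on \<mu>' G"
    proof (rule inj_onI)
      fix j j' assume "j \<in> G" "j' \<in> G" "\<mu>' j = \<mu>' j'"
      then have "\<mu> j = \<mu> j'"
        using multiset_split_count[of "\<mu> j" w] multiset_split_count[of "\<mu> j'" w]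
        by (simp add: G_def \<mu>'_def)
      then show "j = j'"
        using \<open>j \<in> G\<close> \<open>j' \<in> G\<close> insert.prems(3) by (auto simp: G_def dest: inj_onD)
    qed
    moreover have "\<forall>j\<in>G. set_mset (\<mu>' j) \<subseteq> W"
      using insert.prems(1) by (auto simp: G_def \<mu>'_def)
    ultimately show ?case
      using insert.IH[of G \<mu>' i] insert.prems(2,5) by (simp add: G_def)
  qed
qed

fun mon_const :: "'a::field \<Rightarrow> 'a \<Rightarrow> 'a \<Rightarrow> gvar mon \<Rightarrow> 'a" where
  "mon_const \<alpha> \<beta> \<gamma> (Var v) = 1"
| "mon_const \<alpha> \<beta> \<gamma> (Mul u w) =
     oct_const \<alpha> \<beta> \<gamma> (mdeg u) (mdeg w) * mon_const \<alpha> \<beta> \<gamma> u * mon_const \<alpha> \<beta> \<gamma> w"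

lemma mon_const_nonzero: "\<alpha> \<noteq> 0 \<Longrightarrow> \<beta> \<noteq> 0 \<Longrightarrow> \<gamma> \<noteq> 0 \<Longrightarrow> mon_const \<alpha> \<beta> \<gamma> m \<noteq> 0"
  by (induction m) (auto simp: oct_const_nonzero)

lemma oeval_mon_obasis:
  "oeval_mon \<alpha> \<beta> \<gamma> (\<lambda>v. obasis (snd v) (t v)) m
   = obasis (mdeg m) (mon_const \<alpha> \<beta> \<gamma> m * prod_mset (image_mset t (mset (leaves m))))"
  by (induction m) (simp_all add: omul_obasis prod_mset_Un mult_ac)

lemma ocoord_oeval_obasis:
  "ocoord a (oeval \<alpha> \<beta> \<gamma> (\<lambda>v. obasis (snd v) (t v)) p)
   = (\<Sum>m\<in>{m \<in> Poly_Mapping.keys p. mdeg m = a}.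
        Poly_Mapping.lookup p m * mon_const \<alpha> \<beta> \<gamma> m * prod_mset (image_mset t (mset (leaves m))))"
proof -
  have "ocoord a (oeval \<alpha> \<beta> \<gamma> (\<lambda>v. obasis (snd v) (t v)) p)
      = (\<Sum>m\<in>Poly_Mapping.keys p. if mdeg m = a then Poly_Mapping.lookup p m * mon_const \<alpha> \<beta> \<gamma> m
           * prod_mset (image_mset t (mset (leaves m))) else 0)"
    unfolding oeval_def ocoord_sum
    by (intro sum.cong refl) (simp add: oeval_mon_obasis osc_obasis ocoord_obasis eq_commute mult.assoc)
  then show ?thesis
    by (simp add: sum.inter_filter)
qed

lemma T_oct_eq_0_if_inj_on_leaves:
  fixes \<alpha> \<beta> \<gamma> :: "'a::field"
  assumes "infinite (UNIV :: 'a set)" and "\<alpha> \<noteq> 0" "\<beta> \<noteq> 0" "\<gamma> \<noteq> 0"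
    and "p \<in> T_oct \<alpha> \<beta> \<gamma>" and "inj_on (\<lambda>m. mset (leaves m)) (Poly_Mapping.keys p)"
  shows "p = 0"
proof -
  have "Poly_Mapping.lookup p m = 0" if m: "m \<in> Poly_Mapping.keys p" for m
  proof -
    let ?K = "{n \<in> Poly_Mapping.keys p. mdeg n = mdeg m}"
    have "Poly_Mapping.lookup p m * mon_const \<alpha> \<beta> \<gamma> m = 0"
    proof (rule coeff_eq_0_if_multiset_poly_fun_eq_0[OF assms(1),
          where e = "\<lambda>n. Poly_Mapping.lookup p n * mon_const \<alpha> \<beta> \<gamma> n" and \<mu> = "\<lambda>n. mset (leaves n)"])
      show "finite ?K" by simp
      show "inj_on (\<lambda>n. mset (leaves n)) ?K"
        using assms(6) by (rule inj_on_subset) auto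
      show "(\<Sum>n\<in>?K. Poly_Mapping.lookup p n * mon_const \<alpha> \<beta> \<gamma> n
              * prod_mset (image_mset t (mset (leaves n)))) = 0" for t
        using assms(5) unfolding T_oct_iff_obasis by (simp flip: ocoord_oeval_obasis)
      show "m \<in> ?K" using m by simp
    qed
    then show ?thesis
      using mon_const_nonzero[OF assms(2-4)] by simp
  qed
  then show "p = 0"
    by (meson in_keys_iff keys_eq_empty equals0I)
qed

theorem mainTheorem1:
  fixes \<alpha> \<beta> \<gamma> :: "'a::field"
  assumes "infinite (UNIV :: 'a set)"
    and "(2::'a) \<noteq> 0"
    and "\<alpha> \<noteq> 0" and "\<beta> \<noteq> 0" and "\<gamma> \<noteq> 0"
  shows "T_oct \<alpha> \<beta> \<gamma> = T_generated (oct_gens :: 'a fpoly set)"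
proof
  let ?I = "T_generated (oct_gens :: 'a fpoly set)"
  show I_T_oct: "?I \<subseteq> T_oct \<alpha> \<beta> \<gamma>"
    by (rule T_generated_least[OF graded_T_ideal_T_oct oct_gens_subset_T_oct])
  interpret oct_ideal ?I
    by unfold_locales (rule graded_T_ideal_T_generated, rule T_generated_subset)
  show "T_oct \<alpha> \<beta> \<gamma> \<subseteq> ?I"
  proof
    fix f assume f: "f \<in> T_oct \<alpha> \<beta> \<gamma>"
    obtain g where fg: "f - g \<in> ?I" and inj: "inj_on (\<lambda>m. mset (leaves m)) (Poly_Mapping.keys g)"
      by (rule congruent_inj_on_leaves)
    have "f - (f - g) \<in> T_oct \<alpha> \<beta> \<gamma>"
      using graded_T_ideal_diff[OF graded_T_ideal_T_oct f] fg I_T_oct by blast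
    then have "g = 0"
      using T_oct_eq_0_if_inj_on_leaves[OF assms(1,3-5) _ inj] by simp
    with fg show "f \<in> ?I" by simp
  qed
qed

end
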